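(* Let $\Gamma$ be a commutative Noetherian ring, $M$ a nonzero $\Gamma$-module and $i$ a nonlimit ordinal. The following assertions are equivalent: (1) $t_i(M)=M$ but $t_{i-1}(M)=0$; (2) both of the following hold: (a) for every $x\in M$ there are prime ideals $\mathbf p_1,\dots,\mathbf p_r$ of coheight exactly $i$ and integers $n_1,\dots,n_r>0$ such that $\mathbf p_1^{n_1}\cdots\mathbf p_r^{n_r}x=0$; (b) if $\mathbf p$ is a prime ideal of coheight $<i$ and $x\in M$ satisfies $\mathbf p x=0$, then $x=0$; (3) every prime ideal in $\operatorname{Ass}(M)$ has coheight exactly $i$.
   Context: Define subsets $Z_j\subseteq\operatorname{Spec}\Gamma$ for ordinals $j$: $Z_0=\operatorname{Specm}\Gamma$ (maximal ideals); for a limit ordinal $j>0$, $Z_j=\bigcup_{k<j}Z_k$; for a successor ordinal $j$, $Z_j=Z_{j-1}\cup\operatorname{Max}(\operatorname{Spec}\Gamma\setminus Z_{j-1})$, where $\operatorname{Max}$ denotes inclusion-maximal elements. The coheight $\operatorname{cht}(\mathbf p)$ of a prime $\mathbf p$ is the least ordinal $j$ with $\mathbf p\in Z_j$. Each $Z_j$ is closed under specialization; $\mathcal T_j$ is the class of $\Gamma$-modules $T$ with $\operatorname{Supp}(T)=\{\mathbf p: T_{\mathbf p}\ne 0\}\subseteq Z_j$, and $t_j(M)$ is the largest submodule of $M$ lying in $\mathcal T_j$. Convention: $Z_{-1}=\emptyset$ and $t_{-1}(M)=0$ (used when $i=0$). $\operatorname{Ass}(M)$ is the set of primes of the form $\operatorname{ann}_\Gamma(x)$,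 $x\in M$. *)

theory Defs
  imports "HOL-Algebra.Algebra"
begin

(* Ordinals are modelled as elements of an arbitrary well-ordered type 'o
   (class wellorder); the theorem is polymorphic in 'o. *)

definition ord_is_zero :: "'o::wellorder \<Rightarrow> bool" where
  "ord_is_zero j \<longleftrightarrow> (\<forall>k. \<not> k < j)"

definition ord_is_succ :: "'o::wellorder \<Rightarrow> bool" where
  "ord_is_succ j \<longleftrightarrow> (\<exists>k. k < j \<and> (\<forall>l. \<not> (k < l \<and> l < j)))"

definition ord_pred :: "'o::wellorder \<Rightarrow> 'o" where
  "ord_pred j = (THE k. k < j \<and> (\<forall>l. \<not> (k < l \<and> l < j)))"

definition ord_nonlimit :: "'o::wellorder \<Rightarrow> bool" where
  "ord_nonlimit j \<longleftrightarrow> ord_is_zero j \<or> ord_is_succ j"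

definition Spec :: "('a, 'b) ring_scheme \<Rightarrow> 'a set set" where
  "Spec R = {p. primeideal p R}"

definition Specm :: "('a, 'b) ring_scheme \<Rightarrow> 'a set set" where
  "Specm R = {p. maximalideal p R}"

definition Max_incl :: "'a set set \<Rightarrow> 'a set set" where
  "Max_incl S = {p \<in> S. \<forall>q \<in> S. p \<subseteq> q \<longrightarrow> q = p}"

definition Zst :: "('a, 'b) ring_scheme \<Rightarrow> 'o::wellorder \<Rightarrow> 'a set set" where
  "Zst R = wfrec {(k, j). k < j}
     (\<lambda>Z j. if ord_is_zero j then Specm R
            else if ord_is_succ j then Z (ord_pred j) \<union> Max_incl (Spec R - Z (ord_pred j))
            else (\<Union>k \<in> {k. k < j}. Z k))"

definition coheight_is :: "('a, 'b) ring_scheme \<Rightarrow> 'a set \<Rightarrow> 'o::wellorder \<Rightarrow> bool" where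
  "coheight_is R p j \<longleftrightarrow> p \<in> Zst R j \<and> (\<forall>k < j. p \<notin> Zst R k)"

(* Supp(N) = {p. N_p \<noteq> 0}; N_p \<noteq> 0 iff some x/1 \<noteq> 0 in N_p,
   i.e. some x \<in> N is not killed by any s \<notin> p *)
definition Supp :: "('a, 'b) ring_scheme \<Rightarrow> ('a, 'c) module \<Rightarrow> 'c set \<Rightarrow> 'a set set" where
  "Supp R M N = {p \<in> Spec R. \<exists>x \<in> N. \<forall>s \<in> carrier R - p. s \<odot>\<^bsub>M\<^esub> x \<noteq> \<zero>\<^bsub>M\<^esub>}"

definition tors :: "('a, 'b) ring_scheme \<Rightarrow> ('a, 'c) module \<Rightarrow> 'o::wellorder \<Rightarrow> 'c set" where
  "tors R M j = (GREATEST N. submodule N R M \<and> Supp R M N \<subseteq> Zst R j)"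

definition tors_prev :: "('a, 'b) ring_scheme \<Rightarrow> ('a, 'c) module \<Rightarrow> 'o::wellorder \<Rightarrow> 'c set" where
  "tors_prev R M j = (if ord_is_zero j then {\<zero>\<^bsub>M\<^esub>} else tors R M (ord_pred j))"

definition ann :: "('a, 'b) ring_scheme \<Rightarrow> ('a, 'c) module \<Rightarrow> 'c \<Rightarrow> 'a set" where
  "ann R M x = {a \<in> carrier R. a \<odot>\<^bsub>M\<^esub> x = \<zero>\<^bsub>M\<^esub>}"

definition Ass :: "('a, 'b) ring_scheme \<Rightarrow> ('a, 'c) module \<Rightarrow> 'a set set" where
  "Ass R M = {p. primeideal p R \<and> (\<exists>x \<in> carrier M. p = ann R M x)}"

primrec ideal_power :: "('a, 'b) ring_scheme \<Rightarrow> 'a set \<Rightarrow> nat \<Rightarrow> 'a set" where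
  "ideal_power R I 0 = carrier R"
| "ideal_power R I (Suc n) = I \<cdot>\<^bsub>R\<^esub> ideal_power R I n"

primrec ideal_prod_list :: "('a, 'b) ring_scheme \<Rightarrow> ('a set \<times> nat) list \<Rightarrow> 'a set" where
  "ideal_prod_list R [] = carrier R"
| "ideal_prod_list R (pn # ps) = ideal_power R (fst pn) (snd pn) \<cdot>\<^bsub>R\<^esub> ideal_prod_list R ps"

end

theory Submission
  imports Defs
begin

text \<open>
  All three conditions say that every associated prime of \<open>M\<close> lies in \<open>Z\<^sub>i\<close> but not in
  \<open>Z\<^sub>i\<^sub>-\<^sub>1\<close>. Two facts about Noetherian rings translate between them: every nonzero element
  has an associated prime containing its annihilator, and if all associated primes lie in a set
  \<open>Q\<close>, then every element is killed by a product of powers of primes from \<open>Q\<close> (Noetherian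
  induction on annihilators). Since each \<open>Z\<^sub>j\<close> is closed under specialization, a prime containing
  such a product lies in \<open>Z\<^sub>j\<close> as soon as the factors do.
\<close>

section \<open>The filtration by coheight\<close>

lemma ord_pred_is_predecessor:
  assumes "ord_is_succ (j::'o::wellorder)"
  shows "ord_pred j < j \<and> (\<forall>l. \<not> (ord_pred j < l \<and> l < j))"
proof -
  let ?P = "\<lambda>k. k < j \<and> (\<forall>l. \<not> (k < l \<and> l < j))"
  have "\<exists>!k. ?P k"
  proof (rule ex_ex1I)
    show "\<exists>k. ?P k" using assms unfolding ord_is_succ_def .
    show "a = b" if "?P a" "?P b" for a b
    proof (rule ccontr)
      assume "a \<noteq> b"
      then consider "a < b" | "b < a" by (rule linorder_neqE)
      then show False using that by cases blast+
    qed
  qed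
  then show ?thesis unfolding ord_pred_def by (rule theI')
qed

lemma ord_pred_less: "ord_is_succ j \<Longrightarrow> ord_pred j < j"
  using ord_pred_is_predecessor by blast

lemma le_ord_pred_iff_less:
  assumes "ord_is_succ j"
  shows "k \<le> ord_pred j \<longleftrightarrow> k < j"
proof
  show "k \<le> ord_pred j \<Longrightarrow> k < j" using ord_pred_less[OF assms] by (rule le_less_trans[rotated])
  assume "k < j"
  then have "\<not> ord_pred j < k" using ord_pred_is_predecessor[OF assms] by blast
  then show "k \<le> ord_pred j" by (simp add: not_less)
qed

lemma Zst_unfold:
  "Zst R (j::'o::wellorder) = (if ord_is_zero j then Specm R
     else if ord_is_succ j then Zst R (ord_pred j) \<union> Max_incl (Spec R - Zst R (ord_pred j))
     else (\<Union>k \<in> {k. k < j}. Zst R k))"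
proof -
  define F :: "('o \<Rightarrow> 'a set set) \<Rightarrow> 'o \<Rightarrow> 'a set set" where
    "F = (\<lambda>Z j. if ord_is_zero j then Specm R
       else if ord_is_succ j then Z (ord_pred j) \<union> Max_incl (Spec R - Z (ord_pred j))
       else (\<Union>k \<in> {k. k < j}. Z k))"
  have "Zst R j = F (cut (Zst R) {(k, j). k < j} j) j"
    unfolding Zst_def F_def[symmetric] by (rule wfrec[OF wf])
  moreover have "ord_is_succ j \<Longrightarrow> cut (Zst R) {(k, j). k < j} j (ord_pred j) = Zst R (ord_pred j)"
    by (simp add: cut_apply ord_pred_less)
  moreover have "(\<Union>k \<in> {k. k < j}. cut (Zst R) {(k, j). k < j} j k) = (\<Union>k \<in> {k. k < j}. Zst R k)"
    by (rule SUP_cong) (auto simp: cut_apply)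
  ultimately show ?thesis by (simp add: F_def)
qed

lemma ord_is_succ_not_zero: "ord_is_succ j \<Longrightarrow> \<not> ord_is_zero j"
  using ord_pred_less unfolding ord_is_zero_def by blast

lemma Zst_zero: "ord_is_zero j \<Longrightarrow> Zst R j = Specm R"
  by (subst Zst_unfold) simp

lemma Zst_succ: "ord_is_succ j \<Longrightarrow>
    Zst R j = Zst R (ord_pred j) \<union> Max_incl (Spec R - Zst R (ord_pred j))"
  by (subst Zst_unfold) (simp add: ord_is_succ_not_zero)

lemma Zst_limit: "\<not> ord_is_zero j \<Longrightarrow> \<not> ord_is_succ j \<Longrightarrow> Zst R j = (\<Union>k \<in> {k. k < j}. Zst R k)"
  by (subst Zst_unfold) simp

lemma Zst_mono: "(j::'o::wellorder) \<le> k \<Longrightarrow> Zst R j \<subseteq> Zst R k"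
proof (induction k rule: less_induct)
  case (less k)
  show ?case
  proof (cases "j = k")
    case False
    then have jk: "j < k" using less.prems by simp
    show ?thesis
    proof (cases "ord_is_succ k")
      case True
      then have "j \<le> ord_pred k" using le_ord_pred_iff_less[OF True] jk by simp
      then have "Zst R j \<subseteq> Zst R (ord_pred k)" using less.IH ord_pred_less[OF True] by blast
      then show ?thesis using Zst_succ[OF True] by blast
    next
      case False
      have "\<not> ord_is_zero k" using jk unfolding ord_is_zero_def by blast
      then show ?thesis using Zst_limit[OF _ False] jk by blast
    qed
  qed simp
qed

definition specialization_closed :: "('a, 'b) ring_scheme \<Rightarrow> 'a set set \<Rightarrow> bool" where
  "specialization_closed R S \<longleftrightarrow> (\<forall>p \<in> S. \<forall>q. primeideal q R \<and> p \<subseteq> q \<longrightarrow> q \<in> S)"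

lemma specialization_closedD:
  "specialization_closed R S \<Longrightarrow> p \<in> S \<Longrightarrow> primeideal q R \<Longrightarrow> p \<subseteq> q \<Longrightarrow> q \<in> S"
  unfolding specialization_closed_def by blast

lemma Specm_specialization_closed: "specialization_closed R (Specm R)"
  unfolding specialization_closed_def Specm_def
proof (intro ballI allI impI)
  fix p q assume p: "p \<in> {p. maximalideal p R}" and q: "primeideal q R \<and> p \<subseteq> q"
  have "ideal q R" using q by (simp add: primeideal.axioms(1))
  moreover from this have "q \<subseteq> carrier R" by (auto dest: ideal.Icarr)
  ultimately have "q = p \<or> q = carrier R"
    using p q maximalideal.I_maximal by blast
  then show "q \<in> {p. maximalideal p R}" using p q primeideal.I_notcarr by fastforce
qed

lemma Zst_specialization_closed: "specialization_closed R (Zst R (j::'o::wellorder))"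
proof (induction j rule: less_induct)
  case (less j)
  consider "ord_is_zero j" | "ord_is_succ j" | "\<not> ord_is_zero j" "\<not> ord_is_succ j"
    by blast
  then show ?case
  proof cases
    case 1
    then show ?thesis using Specm_specialization_closed by (simp add: Zst_zero)
  next
    case 2
    have "specialization_closed R (Zst R (ord_pred j))"
      using less.IH ord_pred_less[OF 2] .
    then show ?thesis
      unfolding Zst_succ[OF 2] specialization_closed_def Max_incl_def Spec_def by blast
  next
    case 3
    then show ?thesis using less.IH
      unfolding Zst_limit[OF 3] specialization_closed_def by blast
  qed
qed

definition Zst_prev :: "('a, 'b) ring_scheme \<Rightarrow> 'o::wellorder \<Rightarrow> 'a set set" where
  "Zst_prev R i = (if ord_is_zero i then {} else Zst R (ord_pred i))"

lemma Zst_prev_specialization_closed: "specialization_closed R (Zst_prev R i)"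
  by (simp add: Zst_prev_def Zst_specialization_closed specialization_closed_def[of _ "{}"])

lemma ord_nonlimit_cases:
  assumes "ord_nonlimit i"
  obtains "ord_is_zero i" | "ord_is_succ i" "\<not> ord_is_zero i"
  using assms ord_pred_less unfolding ord_nonlimit_def ord_is_zero_def by blast

lemma ex_less_Zst_iff:
  assumes "ord_is_succ (i::'o::wellorder)"
  shows "(\<exists>j < i. p \<in> Zst R j) \<longleftrightarrow> p \<in> Zst R (ord_pred i)"
proof
  assume "\<exists>j < i. p \<in> Zst R j"
  then obtain j where "j < i" "p \<in> Zst R j" by blast
  moreover have "j \<le> ord_pred i" using le_ord_pred_iff_less[OF assms] \<open>j < i\<close> by simp
  ultimately show "p \<in> Zst R (ord_pred i)" using Zst_mono by blast
qed (use ord_pred_less[OF assms] in blast)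

lemma ex_less_coheight_iff:
  assumes "ord_nonlimit (i::'o::wellorder)"
  shows "(\<exists>j < i. coheight_is R p j) \<longleftrightarrow> p \<in> Zst_prev R i"
  using assms
proof (cases rule: ord_nonlimit_cases)
  case 2
  have "(\<exists>j < i. coheight_is R p j) \<longleftrightarrow> (\<exists>j < i. p \<in> Zst R j)"
  proof
    assume "\<exists>j < i. p \<in> Zst R j"
    then obtain j where j: "j < i" "p \<in> Zst R j" by blast
    define j0 :: 'o where "j0 = (LEAST j. p \<in> Zst R j)"
    have "p \<in> Zst R j0"
      using j(2) unfolding j0_def by (rule LeastI[where P = "\<lambda>j. p \<in> Zst R j"])
    moreover have "p \<notin> Zst R k" if "k < j0" for k
      using that unfolding j0_def by (rule not_less_Least[where P = "\<lambda>j. p \<in> Zst R j"])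
    moreover have "j0 < i"
      using Least_le[where P = "\<lambda>j. p \<in> Zst R j", OF j(2)] j(1) unfolding j0_def
      by (rule le_less_trans)
    ultimately show "\<exists>j < i. coheight_is R p j" unfolding coheight_is_def by blast
  next
    assume "\<exists>j < i. coheight_is R p j"
    then show "\<exists>j < i. p \<in> Zst R j" unfolding coheight_is_def by blast
  qed
  then show ?thesis using 2 by (simp add: Zst_prev_def ex_less_Zst_iff)
qed (simp add: Zst_prev_def ord_is_zero_def)

lemma coheight_is_iff:
  assumes "ord_nonlimit (i::'o::wellorder)"
  shows "coheight_is R p i \<longleftrightarrow> p \<in> Zst R i \<and> p \<notin> Zst_prev R i"
  using assms
proof (cases rule: ord_nonlimit_cases)
  case 2
  then have "(\<forall>k < i. p \<notin> Zst R k) \<longleftrightarrow> p \<notin> Zst R (ord_pred i)"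
    using ex_less_Zst_iff[of i p R] by auto
  then show ?thesis unfolding coheight_is_def Zst_prev_def using 2(2) by simp
qed (simp add: coheight_is_def Zst_prev_def ord_is_zero_def)

section \<open>Products of prime powers\<close>

lemma primeideal_carrier_not_subset: "primeideal P R \<Longrightarrow> \<not> carrier R \<subseteq> P"
proof
  assume P: "primeideal P R" and "carrier R \<subseteq> P"
  moreover have "P \<subseteq> carrier R" using ideal.Icarr[OF primeideal.axioms(1)[OF P]] by blast
  ultimately show False using primeideal.I_notcarr[OF P] by blast
qed

lemma (in ring) ideal_power_is_ideal: "ideal I R \<Longrightarrow> ideal (ideal_power R I n) R"
  by (induction n) (simp_all add: oneideal ideal_prod_is_ideal)

lemma (in ring) ideal_prod_list_is_ideal:
  "\<forall>(p, n) \<in> set ps. ideal p R \<Longrightarrow> ideal (ideal_prod_list R ps) R"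
  by (induction ps) (auto simp: oneideal ideal_prod_is_ideal ideal_power_is_ideal)

lemma (in cring) ideal_prod_list_append:
  assumes "\<forall>(p, n) \<in> set A. ideal p R" "\<forall>(p, n) \<in> set B. ideal p R"
  shows "ideal_prod_list R (A @ B) = ideal_prod_list R A \<cdot> ideal_prod_list R B"
  using assms(1)
proof (induction A)
  case Nil
  have "ideal (ideal_prod_list R B) R" using ideal_prod_list_is_ideal assms(2) .
  then show ?case using ideal_prod_commute[OF oneideal] ideal_prod_one by simp
next
  case (Cons pn A)
  then show ?case
    using ideal_prod_assoc ideal_power_is_ideal ideal_prod_list_is_ideal assms(2)
    by (cases pn) simp
qed

lemma (in cring) ideal_prod_list_append_subset:
  assumes "\<forall>(p, n) \<in> set A. ideal p R" "\<forall>(p, n) \<in> set B. ideal p R"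
  shows "ideal_prod_list R (A @ B) \<subseteq> ideal_prod_list R A \<inter> ideal_prod_list R B"
  unfolding ideal_prod_list_append[OF assms]
  by (rule ideal_prod_inter[OF ideal_prod_list_is_ideal[OF assms(1)] ideal_prod_list_is_ideal[OF assms(2)]])

lemma (in ring) primeideal_power_subsetD:
  assumes "primeideal P R" "ideal I R" "ideal_power R I n \<subseteq> P"
  shows "I \<subseteq> P"
  using assms(3)
proof (induction n)
  case 0
  then show ?case using primeideal_carrier_not_subset[OF assms(1)] by simp
next
  case (Suc n)
  then show ?case
    using primeideal_divides_ideal_prod[OF assms(1,2) ideal_power_is_ideal[OF assms(2)]] by auto
qed

lemma (in ring) primeideal_prod_list_subsetD:
  assumes "primeideal P R" "\<forall>(p, n) \<in> set ps. ideal p R" "ideal_prod_list R ps \<subseteq> P"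
  shows "\<exists>(p, n) \<in> set ps. p \<subseteq> P"
  using assms(2,3)
proof (induction ps)
  case Nil
  then show ?case using primeideal_carrier_not_subset[OF assms(1)] by simp
next
  case (Cons pn ps)
  obtain p n where pn: "pn = (p, n)" by fastforce
  then have "ideal_power R p n \<subseteq> P \<or> ideal_prod_list R ps \<subseteq> P"
    using Cons.prems primeideal_divides_ideal_prod[OF assms(1) ideal_power_is_ideal
        ideal_prod_list_is_ideal] by simp
  then show ?case
    using Cons pn primeideal_power_subsetD[OF assms(1)] by auto
qed

definition prime_power_list :: "('a, 'b) ring_scheme \<Rightarrow> 'a set set \<Rightarrow> ('a set \<times> nat) list \<Rightarrow> bool" where
  "prime_power_list R Q ps \<longleftrightarrow> (\<forall>(p, n) \<in> set ps. primeideal p R \<and> p \<in> Q \<and> 0 < n)"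

lemma prime_power_list_append:
  "prime_power_list R Q A \<Longrightarrow> prime_power_list R Q B \<Longrightarrow> prime_power_list R Q (A @ B)"
  unfolding prime_power_list_def by auto

lemma prime_power_list_ideals: "prime_power_list R Q ps \<Longrightarrow> \<forall>(p, n) \<in> set ps. ideal p R"
  unfolding prime_power_list_def using primeideal.axioms(1) by fastforce

section \<open>Annihilators and associated primes\<close>

lemma noetherian_ring_ex_maximal_ideal:
  assumes "noetherian_ring R" "A \<noteq> {}" "\<And>x. x \<in> A \<Longrightarrow> ideal (f x) R"
  shows "\<exists>x \<in> A. \<forall>y \<in> A. f x \<subseteq> f y \<longrightarrow> f y = f x"
proof -
  have "\<exists>m \<in> f ` A. \<forall>I \<in> f ` A. m \<subseteq> I \<longrightarrow> I = m"
  proof (rule subset_Zorn_nonempty)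
    show "f ` A \<noteq> {}" using assms(2) by simp
    fix C assume C: "C \<noteq> {}" "subset.chain (f ` A) C"
    have "subset.chain {I. ideal I R} C"
      using C(2) assms(3) unfolding pred_on.chain_def by blast
    then have "\<Union>C \<in> C" using noetherian_ring.ideal_chain_is_trivial[OF assms(1) C(1)] by blast
    then show "\<Union>C \<in> f ` A" using C(2) unfolding pred_on.chain_def by blast
  qed
  then show ?thesis by blast
qed

lemma Supp_iff: "p \<in> Supp R M N \<longleftrightarrow> primeideal p R \<and> (\<exists>x \<in> N. ann R M x \<subseteq> p)"
  unfolding Supp_def Spec_def ann_def by blast

text \<open>The elements \<open>x\<close> with \<open>Supp(\<Gamma>x) \<subseteq> S\<close>.\<close>

definition torsion_submodule :: "('a, 'b) ring_scheme \<Rightarrow> ('a, 'c) module \<Rightarrow> 'a set set \<Rightarrow> 'c set" where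
  "torsion_submodule R M S =
     {x \<in> carrier M. \<forall>p. primeideal p R \<longrightarrow> ann R M x \<subseteq> p \<longrightarrow> p \<in> S}"

definition annihilated_by_primes ::
    "('a, 'b) ring_scheme \<Rightarrow> ('a, 'c) module \<Rightarrow> 'a set set \<Rightarrow> 'c \<Rightarrow> bool" where
  "annihilated_by_primes R M Q x \<longleftrightarrow>
     (\<exists>ps. prime_power_list R Q ps \<and> (\<forall>a \<in> ideal_prod_list R ps. a \<odot>\<^bsub>M\<^esub> x = \<zero>\<^bsub>M\<^esub>))"

context
  fixes R :: "('a, 'b) ring_scheme" (structure) and M :: "('a, 'c) module"
  assumes module: "module R M"
begin

interpretation module R M by (rule module)

lemma smult_left_commute:
  "\<lbrakk>a \<in> carrier R; b \<in> carrier R; x \<in> carrier M\<rbrakk>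
    \<Longrightarrow> a \<odot>\<^bsub>M\<^esub> (b \<odot>\<^bsub>M\<^esub> x) = b \<odot>\<^bsub>M\<^esub> (a \<odot>\<^bsub>M\<^esub> x)"
  by (metis R.m_comm smult_assoc1)

lemma ann_ideal: "x \<in> carrier M \<Longrightarrow> ideal (ann R M x) R"
proof (rule idealI[OF R.ring_axioms])
  assume x: "x \<in> carrier M"
  show "subgroup (ann R M x) (add_monoid R)"
  proof (rule R.add.subgroupI)
    show "ann R M x \<subseteq> carrier R" "ann R M x \<noteq> {}"
      using x unfolding ann_def by auto
    show "\<ominus> a \<in> ann R M x" "a \<oplus> b \<in> ann R M x" if "a \<in> ann R M x" "b \<in> ann R M x" for a b
      using that x by (simp_all add: ann_def smult_l_minus smult_l_distr)
  qed
  show "y \<otimes> a \<in> ann R M x" "a \<otimes> y \<in> ann R M x" if "a \<in> ann R M x" "y \<in> carrier R" for a y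
    using that x by (simp_all add: ann_def smult_assoc1 R.m_comm[of a y])
qed

lemma ann_subset_carrier: "ann R M x \<subseteq> carrier R"
  unfolding ann_def by blast

lemma primeideal_ann_imp_nonzero: "primeideal (ann R M x) R \<Longrightarrow> x \<noteq> \<zero>\<^bsub>M\<^esub>"
  using primeideal.I_notcarr unfolding ann_def by fastforce

lemma ann_eq_carrier_iff: "x \<in> carrier M \<Longrightarrow> ann R M x = carrier R \<longleftrightarrow> x = \<zero>\<^bsub>M\<^esub>"
  unfolding ann_def by force

lemma mem_ann_smult_iff:
  "\<lbrakk>a \<in> carrier R; x \<in> carrier M\<rbrakk>
    \<Longrightarrow> b \<in> ann R M (a \<odot>\<^bsub>M\<^esub> x) \<longleftrightarrow> b \<in> carrier R \<and> b \<otimes> a \<in> ann R M x"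
  unfolding ann_def by (auto simp: smult_assoc1)

lemma ann_subset_ann_smult:
  assumes "a \<in> carrier R" "x \<in> carrier M"
  shows "ann R M x \<subseteq> ann R M (a \<odot>\<^bsub>M\<^esub> x)"
proof
  fix b assume "b \<in> ann R M x"
  then have "b \<in> carrier R" "b \<odot>\<^bsub>M\<^esub> x = \<zero>\<^bsub>M\<^esub>" unfolding ann_def by auto
  then show "b \<in> ann R M (a \<odot>\<^bsub>M\<^esub> x)"
    using assms smult_left_commute[of b a x] unfolding ann_def by simp
qed

lemma subset_ann_iff:
  "I \<subseteq> carrier R \<Longrightarrow> I \<subseteq> ann R M x \<longleftrightarrow> (\<forall>a \<in> I. a \<odot>\<^bsub>M\<^esub> x = \<zero>\<^bsub>M\<^esub>)"
  unfolding ann_def by blast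

lemma primeideal_ann_if_maximal:
  assumes y: "y \<in> carrier M" "y \<noteq> \<zero>\<^bsub>M\<^esub>"
    and maximal: "\<And>a. \<lbrakk>a \<in> carrier R; a \<odot>\<^bsub>M\<^esub> y \<noteq> \<zero>\<^bsub>M\<^esub>\<rbrakk> \<Longrightarrow> ann R M (a \<odot>\<^bsub>M\<^esub> y) = ann R M y"
  shows "primeideal (ann R M y) R"
proof (rule primeidealI[OF ann_ideal[OF y(1)] is_cring])
  show "carrier R \<noteq> ann R M y" using ann_eq_carrier_iff y by blast
  fix a b assume ab: "a \<in> carrier R" "b \<in> carrier R" "a \<otimes> b \<in> ann R M y"
  show "a \<in> ann R M y \<or> b \<in> ann R M y"
  proof (cases "a \<odot>\<^bsub>M\<^esub> y = \<zero>\<^bsub>M\<^esub>")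
    case True
    then show ?thesis using ab(1) unfolding ann_def by blast
  next
    case False
    have "b \<in> ann R M (a \<odot>\<^bsub>M\<^esub> y)"
      using ab y(1) by (simp add: mem_ann_smult_iff R.m_comm)
    then show ?thesis using maximal[OF ab(1) False] by blast
  qed
qed

lemma Ass_above_ann:
  assumes "noetherian_ring R" "x \<in> carrier M" "x \<noteq> \<zero>\<^bsub>M\<^esub>"
  shows "\<exists>p \<in> Ass R M. ann R M x \<subseteq> p"
proof -
  let ?X = "{r \<in> carrier R. r \<odot>\<^bsub>M\<^esub> x \<noteq> \<zero>\<^bsub>M\<^esub>}"
  have "?X \<noteq> {}" using assms(2,3) by (auto intro!: exI[of _ \<one>])
  then have "\<exists>r \<in> ?X. \<forall>s \<in> ?X. ann R M (r \<odot>\<^bsub>M\<^esub> x) \<subseteq> ann R M (s \<odot>\<^bsub>M\<^esub> x)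
                    \<longrightarrow> ann R M (s \<odot>\<^bsub>M\<^esub> x) = ann R M (r \<odot>\<^bsub>M\<^esub> x)"
  proof (rule noetherian_ring_ex_maximal_ideal[OF assms(1)])
    show "ideal (ann R M (r \<odot>\<^bsub>M\<^esub> x)) R" if "r \<in> ?X" for r
      using that by (intro ann_ideal smult_closed assms(2)) simp
  qed
  then obtain r where "r \<in> ?X"
    and maximal: "\<forall>s \<in> ?X. ann R M (r \<odot>\<^bsub>M\<^esub> x) \<subseteq> ann R M (s \<odot>\<^bsub>M\<^esub> x)
                    \<longrightarrow> ann R M (s \<odot>\<^bsub>M\<^esub> x) = ann R M (r \<odot>\<^bsub>M\<^esub> x)"
    by (rule bexE)
  then have r: "r \<in> carrier R" "r \<odot>\<^bsub>M\<^esub> x \<noteq> \<zero>\<^bsub>M\<^esub>" by auto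
  have "primeideal (ann R M (r \<odot>\<^bsub>M\<^esub> x)) R"
  proof (rule primeideal_ann_if_maximal)
    fix a assume a: "a \<in> carrier R" "a \<odot>\<^bsub>M\<^esub> (r \<odot>\<^bsub>M\<^esub> x) \<noteq> \<zero>\<^bsub>M\<^esub>"
    have eq: "a \<odot>\<^bsub>M\<^esub> (r \<odot>\<^bsub>M\<^esub> x) = (a \<otimes> r) \<odot>\<^bsub>M\<^esub> x"
      using a(1) r(1) assms(2) by (simp add: smult_assoc1)
    then have "a \<otimes> r \<in> ?X" using a r(1) by simp
    moreover have "ann R M (r \<odot>\<^bsub>M\<^esub> x) \<subseteq> ann R M ((a \<otimes> r) \<odot>\<^bsub>M\<^esub> x)"
      using ann_subset_ann_smult[OF a(1) smult_closed[OF r(1) assms(2)]] eq by simp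
    ultimately show "ann R M (a \<odot>\<^bsub>M\<^esub> (r \<odot>\<^bsub>M\<^esub> x)) = ann R M (r \<odot>\<^bsub>M\<^esub> x)"
      using maximal eq by simp
  qed (use r assms(2) in auto)
  moreover have "ann R M x \<subseteq> ann R M (r \<odot>\<^bsub>M\<^esub> x)"
    using ann_subset_ann_smult r(1) assms(2) .
  ultimately show ?thesis using r(1) assms(2) unfolding Ass_def by auto
qed

lemma zero_mem_torsion_submodule: "\<zero>\<^bsub>M\<^esub> \<in> torsion_submodule R M S"
proof -
  have "ann R M \<zero>\<^bsub>M\<^esub> = carrier R" by (simp add: ann_eq_carrier_iff)
  then show ?thesis using primeideal_carrier_not_subset unfolding torsion_submodule_def by auto
qed

lemma submodule_torsion_submodule: "submodule (torsion_submodule R M S) R M"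
proof (rule submoduleI)
  have smult_mem: "a \<odot>\<^bsub>M\<^esub> x \<in> torsion_submodule R M S"
    if "a \<in> carrier R" "x \<in> torsion_submodule R M S" for a x
    using that ann_subset_ann_smult unfolding torsion_submodule_def by blast
  then show "\<And>a x. \<lbrakk>a \<in> carrier R; x \<in> torsion_submodule R M S\<rbrakk>
      \<Longrightarrow> a \<odot>\<^bsub>M\<^esub> x \<in> torsion_submodule R M S" .
  show "torsion_submodule R M S \<subseteq> carrier M" unfolding torsion_submodule_def by blast
  show "\<zero>\<^bsub>M\<^esub> \<in> torsion_submodule R M S" by (rule zero_mem_torsion_submodule)
  show "\<ominus>\<^bsub>M\<^esub> x \<in> torsion_submodule R M S" if x: "x \<in> torsion_submodule R M S" for x
  proof -
    have "x \<in> carrier M" using x unfolding torsion_submodule_def by blast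
    then have "\<ominus>\<^bsub>M\<^esub> x = (\<ominus> \<one>) \<odot>\<^bsub>M\<^esub> x" by (simp add: smult_l_minus)
    then show ?thesis using smult_mem[OF _ x] by simp
  qed
next
  fix x y assume xy: "x \<in> torsion_submodule R M S" "y \<in> torsion_submodule R M S"
  have "p \<in> S" if p: "primeideal p R" "ann R M (x \<oplus>\<^bsub>M\<^esub> y) \<subseteq> p" for p
  proof (rule ccontr)
    assume "p \<notin> S"
    then obtain a b where a: "a \<in> ann R M x" "a \<notin> p" and b: "b \<in> ann R M y" "b \<notin> p"
      using xy p(1) unfolding torsion_submodule_def by blast
    have x: "x \<in> carrier M" and y: "y \<in> carrier M"
      using xy unfolding torsion_submodule_def by auto
    have ab: "a \<in> carrier R" "b \<in> carrier R" using a(1) b(1) ann_subset_carrier by auto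
    have "(a \<otimes> b) \<odot>\<^bsub>M\<^esub> x = \<zero>\<^bsub>M\<^esub>" "(a \<otimes> b) \<odot>\<^bsub>M\<^esub> y = \<zero>\<^bsub>M\<^esub>"
      using a(1) b(1) ab x y smult_left_commute[of a b]
      by (auto simp: ann_def smult_assoc1)
    then have "a \<otimes> b \<in> ann R M (x \<oplus>\<^bsub>M\<^esub> y)"
      using ab x y by (simp add: ann_def smult_r_distr)
    then show False
      using p a(2) b(2) primeideal.I_prime[OF p(1) ab] by blast
  qed
  then show "x \<oplus>\<^bsub>M\<^esub> y \<in> torsion_submodule R M S"
    using xy unfolding torsion_submodule_def by auto
qed

lemma Supp_torsion_submodule_subset: "Supp R M (torsion_submodule R M S) \<subseteq> S"
  by (auto simp: Supp_iff torsion_submodule_def)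

lemma tors_eq_torsion_submodule: "tors R M j = torsion_submodule R M (Zst R j)"
  unfolding tors_def
proof (rule Greatest_equality)
  show "submodule (torsion_submodule R M (Zst R j)) R M \<and>
      Supp R M (torsion_submodule R M (Zst R j)) \<subseteq> Zst R j"
    using submodule_torsion_submodule Supp_torsion_submodule_subset by blast
  fix N assume N: "submodule N R M \<and> Supp R M N \<subseteq> Zst R j"
  show "N \<subseteq> torsion_submodule R M (Zst R j)"
  proof
    fix x assume x: "x \<in> N"
    then have "x \<in> carrier M" using N submoduleE(1) by blast
    moreover have "p \<in> Zst R j" if "primeideal p R" "ann R M x \<subseteq> p" for p
      using that x N Supp_iff[of p R M N] by blast
    ultimately show "x \<in> torsion_submodule R M (Zst R j)"
      unfolding torsion_submodule_def by blast
  qed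
qed

lemma annihilated_by_primes_iff:
  "annihilated_by_primes R M Q x \<longleftrightarrow>
     (\<exists>ps. prime_power_list R Q ps \<and> ideal_prod_list R ps \<subseteq> ann R M x)"
  unfolding annihilated_by_primes_def
  using subset_ann_iff ideal.Icarr[OF R.ideal_prod_list_is_ideal[OF prime_power_list_ideals]]
  by (meson subsetI)

lemma annihilated_by_primes_zero: "annihilated_by_primes R M Q \<zero>\<^bsub>M\<^esub>"
  unfolding annihilated_by_primes_def prime_power_list_def by (auto intro!: exI[of _ "[]"])

lemma annihilated_by_primes_if_prime_ann:
  assumes "x \<in> carrier M" "primeideal (ann R M x) R" "ann R M x \<in> Q"
  shows "annihilated_by_primes R M Q x"
proof -
  have "ideal_prod_list R [(ann R M x, 1)] = ann R M x"
    using R.ideal_prod_one[OF ann_ideal[OF assms(1)]] by simp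
  then show ?thesis
    using assms(2,3) unfolding annihilated_by_primes_iff prime_power_list_def
    by (intro exI[of _ "[(ann R M x, 1)]"]) auto
qed

lemma annihilated_by_primes_prime_above:
  assumes "annihilated_by_primes R M Q x" "primeideal p R" "ann R M x \<subseteq> p"
  shows "\<exists>q \<in> Q. q \<subseteq> p"
proof -
  obtain ps where ps: "prime_power_list R Q ps" "ideal_prod_list R ps \<subseteq> ann R M x"
    using assms(1) unfolding annihilated_by_primes_iff by blast
  then obtain q n where "(q, n) \<in> set ps" "q \<subseteq> p"
    using R.primeideal_prod_list_subsetD[OF assms(2) prime_power_list_ideals] assms(3) by blast
  then show ?thesis using ps(1) unfolding prime_power_list_def by blast
qed

lemma annihilated_by_primes_finite_family:
  assumes "finite C" "\<forall>c \<in> C. annihilated_by_primes R M Q (f c)"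
  shows "\<exists>ps. prime_power_list R Q ps \<and> (\<forall>c \<in> C. ideal_prod_list R ps \<subseteq> ann R M (f c))"
  using assms
proof (induction C rule: finite_induct)
  case empty
  show ?case by (auto simp: prime_power_list_def intro!: exI[of _ "[]"])
next
  case (insert c C)
  then obtain A B where A: "prime_power_list R Q A" "\<forall>c \<in> C. ideal_prod_list R A \<subseteq> ann R M (f c)"
    and B: "prime_power_list R Q B" "ideal_prod_list R B \<subseteq> ann R M (f c)"
    unfolding annihilated_by_primes_iff by auto
  then have "\<forall>c' \<in> insert c C. ideal_prod_list R (A @ B) \<subseteq> ann R M (f c')"
    using R.ideal_prod_list_append_subset[OF prime_power_list_ideals prime_power_list_ideals] by blast
  then show ?case using prime_power_list_append[OF A(1) B(1)] by blast
qed

lemma ideal_prod_genideal_subset_ann: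
  assumes I: "ideal I R" and C: "C \<subseteq> carrier R" and y: "y \<in> carrier M"
    and kills: "\<forall>c \<in> C. I \<subseteq> ann R M (c \<odot>\<^bsub>M\<^esub> y)"
  shows "I \<cdot> (Idl C) \<subseteq> ann R M y"
proof
  fix s assume "s \<in> I \<cdot> (Idl C)"
  then show "s \<in> ann R M y"
  proof (induction s rule: ideal_prod.induct)
    case (prod a b)
    have a: "a \<in> carrier R" using prod(1) ideal.Icarr[OF I] by blast
    have "C \<subseteq> ann R M (a \<odot>\<^bsub>M\<^esub> y)"
    proof
      fix c assume c: "c \<in> C"
      then have "c \<in> carrier R" using C by blast
      moreover have "a \<in> ann R M (c \<odot>\<^bsub>M\<^esub> y)" using kills c prod(1) by blast
      ultimately show "c \<in> ann R M (a \<odot>\<^bsub>M\<^esub> y)"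
        using a y by (simp add: mem_ann_smult_iff R.m_comm)
    qed
    then have "Idl C \<subseteq> ann R M (a \<odot>\<^bsub>M\<^esub> y)"
      using R.genideal_minimal[OF ann_ideal] a y by simp
    then have "b \<in> carrier R" "b \<otimes> a \<in> ann R M y"
      using prod(2) mem_ann_smult_iff[OF a y] by auto
    then show ?case using a by (simp add: R.m_comm)
  next
    case (sum s1 s2)
    then show ?case using additive_subgroup.a_closed[OF ideal.axioms(1)[OF ann_ideal[OF y]]] by simp
  qed
qed

lemma ann_induct:
  assumes "noetherian_ring R" "x \<in> carrier M"
    and step: "\<And>y. \<lbrakk>y \<in> carrier M; \<And>w. \<lbrakk>w \<in> carrier M; ann R M y \<subset> ann R M w\<rbrakk> \<Longrightarrow> P w\<rbrakk> \<Longrightarrow> P y"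
  shows "P x"
proof (rule ccontr)
  assume "\<not> P x"
  then have "{w \<in> carrier M. \<not> P w} \<noteq> {}" using assms(2) by blast
  then have "\<exists>y \<in> {w \<in> carrier M. \<not> P w}. \<forall>w \<in> {w \<in> carrier M. \<not> P w}.
      ann R M y \<subseteq> ann R M w \<longrightarrow> ann R M w = ann R M y"
    by (rule noetherian_ring_ex_maximal_ideal[OF assms(1)]) (simp add: ann_ideal)
  then obtain y where y: "y \<in> {w \<in> carrier M. \<not> P w}"
    and maximal: "\<forall>w \<in> {w \<in> carrier M. \<not> P w}. ann R M y \<subseteq> ann R M w \<longrightarrow> ann R M w = ann R M y"
    by (rule bexE)
  have "P w" if "w \<in> carrier M" "ann R M y \<subset> ann R M w" for w
    using maximal that by blast
  then show False using step y by blast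
qed

text \<open>
  If \<open>ab\<close> kills \<open>y\<close> but neither \<open>a\<close> nor \<open>b\<close> does, then \<open>ay\<close> has a larger annihilator, so
  it is killed by a product \<open>J\<close> of prime powers. For each of the finitely many generators \<open>c\<close> of
  \<open>J\<close>, \<open>a\<close> kills \<open>cy\<close>, so these are all killed by one such product \<open>K\<close>; then \<open>KJ\<close> kills \<open>y\<close>.
\<close>

lemma annihilated_by_primes_if_not_prime_ann:
  assumes noeth: "noetherian_ring R" and y: "y \<in> carrier M"
    and not_prime: "\<not> primeideal (ann R M y) R" and nonzero: "y \<noteq> \<zero>\<^bsub>M\<^esub>"
    and IH: "\<And>w. \<lbrakk>w \<in> carrier M; ann R M y \<subset> ann R M w\<rbrakk> \<Longrightarrow> annihilated_by_primes R M Q w"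
  shows "annihilated_by_primes R M Q y"
proof -
  have "carrier R \<noteq> ann R M y" using ann_eq_carrier_iff y nonzero by blast
  then obtain a b where ab: "a \<in> carrier R" "b \<in> carrier R" "a \<otimes> b \<in> ann R M y"
    and a: "a \<notin> ann R M y" and b: "b \<notin> ann R M y"
    using primeidealI[OF ann_ideal[OF y] is_cring] not_prime by blast
  have "b \<in> ann R M (a \<odot>\<^bsub>M\<^esub> y)" using ab y by (simp add: mem_ann_smult_iff R.m_comm)
  then have "annihilated_by_primes R M Q (a \<odot>\<^bsub>M\<^esub> y)"
    using IH ann_subset_ann_smult[OF ab(1) y] b ab(1) y by blast
  then obtain L where L: "prime_power_list R Q L" "ideal_prod_list R L \<subseteq> ann R M (a \<odot>\<^bsub>M\<^esub> y)"
    unfolding annihilated_by_primes_iff by blast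
  have "ideal (ideal_prod_list R L) R"
    using R.ideal_prod_list_is_ideal[OF prime_power_list_ideals[OF L(1)]] .
  then obtain C where C: "C \<subseteq> carrier R" "finite C" "ideal_prod_list R L = Idl C"
    using noetherian_ring.finetely_gen[OF noeth] by blast
  have "annihilated_by_primes R M Q (c \<odot>\<^bsub>M\<^esub> y)" if c: "c \<in> C" for c
  proof -
    have cc: "c \<in> carrier R" using C(1) c by blast
    have "c \<in> ann R M (a \<odot>\<^bsub>M\<^esub> y)" using L(2) C c R.genideal_self by blast
    then have "a \<in> ann R M (c \<odot>\<^bsub>M\<^esub> y)"
      using ab(1) cc y by (simp add: mem_ann_smult_iff R.m_comm)
    then have "ann R M y \<subset> ann R M (c \<odot>\<^bsub>M\<^esub> y)"
      using ann_subset_ann_smult[OF cc y] a by blast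
    then show ?thesis using IH cc y by simp
  qed
  then obtain K where K: "prime_power_list R Q K" "\<forall>c \<in> C. ideal_prod_list R K \<subseteq> ann R M (c \<odot>\<^bsub>M\<^esub> y)"
    using annihilated_by_primes_finite_family[OF C(2), of Q "\<lambda>c. c \<odot>\<^bsub>M\<^esub> y"] by blast
  have "ideal_prod_list R (K @ L) = ideal_prod_list R K \<cdot> (Idl C)"
    using R.ideal_prod_list_append[OF prime_power_list_ideals[OF K(1)] prime_power_list_ideals[OF L(1)]]
      C(3) by simp
  also have "\<dots> \<subseteq> ann R M y"
    using ideal_prod_genideal_subset_ann R.ideal_prod_list_is_ideal prime_power_list_ideals
      K C(1) y by blast
  finally show ?thesis
    using prime_power_list_append[OF K(1) L(1)] unfolding annihilated_by_primes_iff by blast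
qed

lemma annihilated_by_primes_if_Ass_subset:
  assumes "noetherian_ring R" "Ass R M \<subseteq> Q" "x \<in> carrier M"
  shows "annihilated_by_primes R M Q x"
  using assms(3)
proof (rule ann_induct[OF assms(1), where P = "annihilated_by_primes R M Q"])
  fix y assume y: "y \<in> carrier M"
    and IH: "\<And>w. \<lbrakk>w \<in> carrier M; ann R M y \<subset> ann R M w\<rbrakk> \<Longrightarrow> annihilated_by_primes R M Q w"
  consider "y = \<zero>\<^bsub>M\<^esub>" | "primeideal (ann R M y) R"
    | "y \<noteq> \<zero>\<^bsub>M\<^esub>" "\<not> primeideal (ann R M y) R"
    by blast
  then show "annihilated_by_primes R M Q y"
  proof cases
    case 1
    then show ?thesis using annihilated_by_primes_zero by simp
  next
    case 2
    then show ?thesis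
      using annihilated_by_primes_if_prime_ann y assms(2) unfolding Ass_def by blast
  next
    case 3
    then show ?thesis using annihilated_by_primes_if_not_prime_ann assms(1) y IH by blast
  qed
qed

section \<open>Associated primes and the torsion submodules\<close>

lemma torsion_submodule_eq_carrier_iff:
  assumes "noetherian_ring R" "specialization_closed R S"
  shows "torsion_submodule R M S = carrier M \<longleftrightarrow> Ass R M \<subseteq> S"
proof
  assume "torsion_submodule R M S = carrier M"
  then show "Ass R M \<subseteq> S" unfolding Ass_def torsion_submodule_def by blast
next
  assume Ass: "Ass R M \<subseteq> S"
  have "x \<in> torsion_submodule R M S" if x: "x \<in> carrier M" for x
  proof -
    have "annihilated_by_primes R M S x"
      using annihilated_by_primes_if_Ass_subset assms(1) Ass x by blast
    then have "p \<in> S" if "primeideal p R" "ann R M x \<subseteq> p" for p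
      using annihilated_by_primes_prime_above that specialization_closedD[OF assms(2)] by blast
    then show ?thesis using x unfolding torsion_submodule_def by blast
  qed
  then show "torsion_submodule R M S = carrier M" unfolding torsion_submodule_def by blast
qed

lemma torsion_submodule_eq_zero_iff:
  assumes "noetherian_ring R" "specialization_closed R S"
  shows "torsion_submodule R M S = {\<zero>\<^bsub>M\<^esub>} \<longleftrightarrow> Ass R M \<inter> S = {}"
proof
  assume zero: "torsion_submodule R M S = {\<zero>\<^bsub>M\<^esub>}"
  show "Ass R M \<inter> S = {}"
  proof (rule ccontr)
    assume "Ass R M \<inter> S \<noteq> {}"
    then obtain x where x: "x \<in> carrier M" "primeideal (ann R M x) R" "ann R M x \<in> S"
      unfolding Ass_def by blast
    then have "x \<in> torsion_submodule R M S"
      using specialization_closedD[OF assms(2)] unfolding torsion_submodule_def by blast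
    then show False using zero x(2) primeideal_ann_imp_nonzero by blast
  qed
next
  assume disjoint: "Ass R M \<inter> S = {}"
  have "x = \<zero>\<^bsub>M\<^esub>" if x: "x \<in> torsion_submodule R M S" for x
  proof (rule ccontr)
    assume "x \<noteq> \<zero>\<^bsub>M\<^esub>"
    moreover have "x \<in> carrier M" using x unfolding torsion_submodule_def by blast
    ultimately obtain p where p: "p \<in> Ass R M" "ann R M x \<subseteq> p"
      using Ass_above_ann[OF assms(1)] by blast
    then have "p \<in> S" using x unfolding torsion_submodule_def Ass_def by blast
    then show False using p(1) disjoint by blast
  qed
  then show "torsion_submodule R M S = {\<zero>\<^bsub>M\<^esub>}" using zero_mem_torsion_submodule by blast
qed

lemma no_prime_kills_iff:
  assumes "noetherian_ring R" "specialization_closed R S"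
  shows "(\<forall>p x. primeideal p R \<and> p \<in> S \<and> x \<in> carrier M \<and> (\<forall>a \<in> p. a \<odot>\<^bsub>M\<^esub> x = \<zero>\<^bsub>M\<^esub>)
            \<longrightarrow> x = \<zero>\<^bsub>M\<^esub>)
         \<longleftrightarrow> Ass R M \<inter> S = {}"
proof
  assume kills: "\<forall>p x. primeideal p R \<and> p \<in> S \<and> x \<in> carrier M \<and> (\<forall>a \<in> p. a \<odot>\<^bsub>M\<^esub> x = \<zero>\<^bsub>M\<^esub>)
            \<longrightarrow> x = \<zero>\<^bsub>M\<^esub>"
  show "Ass R M \<inter> S = {}"
  proof (rule ccontr)
    assume "Ass R M \<inter> S \<noteq> {}"
    then obtain x where x: "x \<in> carrier M" "primeideal (ann R M x) R" "ann R M x \<in> S"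
      unfolding Ass_def by blast
    then have "x = \<zero>\<^bsub>M\<^esub>" using kills unfolding ann_def by blast
    then show False using x(2) primeideal_ann_imp_nonzero by blast
  qed
next
  assume disjoint: "Ass R M \<inter> S = {}"
  show "\<forall>p x. primeideal p R \<and> p \<in> S \<and> x \<in> carrier M \<and> (\<forall>a \<in> p. a \<odot>\<^bsub>M\<^esub> x = \<zero>\<^bsub>M\<^esub>)
            \<longrightarrow> x = \<zero>\<^bsub>M\<^esub>"
  proof (intro allI impI, elim conjE, rule ccontr)
    fix p x assume p: "primeideal p R" "p \<in> S" and x: "x \<in> carrier M" "x \<noteq> \<zero>\<^bsub>M\<^esub>"
      and "\<forall>a \<in> p. a \<odot>\<^bsub>M\<^esub> x = \<zero>\<^bsub>M\<^esub>"
    then have "p \<subseteq> ann R M x"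
      using ideal.Icarr[OF primeideal.axioms(1)[OF p(1)]] unfolding ann_def by blast
    moreover obtain q where "q \<in> Ass R M" "ann R M x \<subseteq> q"
      using Ass_above_ann[OF assms(1) x] by blast
    ultimately show False
      using disjoint p(2) specialization_closedD[OF assms(2)] unfolding Ass_def by blast
  qed
qed

lemma Ass_subset_if_annihilated_by_primes:
  assumes "specialization_closed R S" "Q \<subseteq> S"
    and "\<forall>x \<in> carrier M. annihilated_by_primes R M Q x"
  shows "Ass R M \<subseteq> S"
proof
  fix p assume "p \<in> Ass R M"
  then obtain x where x: "x \<in> carrier M" "primeideal p R" "p = ann R M x" unfolding Ass_def by blast
  then obtain q where "q \<in> Q" "q \<subseteq> p"
    using annihilated_by_primes_prime_above assms(3) by blast
  then show "p \<in> S" using assms(1,2) x(2) specialization_closedD by blast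
qed

lemma tors_prev_eq_torsion_submodule:
  assumes "noetherian_ring R"
  shows "tors_prev R M i = torsion_submodule R M (Zst_prev R i)"
proof (cases "ord_is_zero i")
  case True
  have "specialization_closed R {}" unfolding specialization_closed_def by blast
  then have "torsion_submodule R M {} = {\<zero>\<^bsub>M\<^esub>}"
    using torsion_submodule_eq_zero_iff[OF assms] by simp
  then show ?thesis using True by (simp add: tors_prev_def Zst_prev_def)
qed (simp add: tors_prev_def Zst_prev_def tors_eq_torsion_submodule)

end

theorem corollary2p6:
  fixes R :: "('a, 'b) ring_scheme" and M :: "('a, 'c) module" and i :: "'o::wellorder"
  assumes "cring R" and "noetherian_ring R" and "module R M"
    and "carrier M \<noteq> {\<zero>\<^bsub>M\<^esub>}"
    and "ord_nonlimit i"
  shows "((tors R M i = carrier M \<and> tors_prev R M i = {\<zero>\<^bsub>M\<^esub>})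
          \<longleftrightarrow>
          ((\<forall>x \<in> carrier M. \<exists>ps :: ('a set \<times> nat) list.
               (\<forall>(p, n) \<in> set ps. primeideal p R \<and> coheight_is R p i \<and> n > 0) \<and>
               (\<forall>a \<in> ideal_prod_list R ps. a \<odot>\<^bsub>M\<^esub> x = \<zero>\<^bsub>M\<^esub>)) \<and>
           (\<forall>p x. primeideal p R \<and> (\<exists>j < i. coheight_is R p j) \<and> x \<in> carrier M \<and>
               (\<forall>a \<in> p. a \<odot>\<^bsub>M\<^esub> x = \<zero>\<^bsub>M\<^esub>) \<longrightarrow> x = \<zero>\<^bsub>M\<^esub>)))
       \<and> ((tors R M i = carrier M \<and> tors_prev R M i = {\<zero>\<^bsub>M\<^esub>})
          \<longleftrightarrow> (\<forall>p \<in> Ass R M. coheight_is R p i))"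
proof -
  note module = assms(3) and noeth = assms(2)
  let ?Ass_in_Z = "Ass R M \<subseteq> Zst R i \<and> Ass R M \<inter> Zst_prev R i = {}"
  have cond1: "tors R M i = carrier M \<and> tors_prev R M i = {\<zero>\<^bsub>M\<^esub>} \<longleftrightarrow> ?Ass_in_Z"
    by (simp add: tors_eq_torsion_submodule[OF module] tors_prev_eq_torsion_submodule[OF module noeth]
        torsion_submodule_eq_carrier_iff[OF module noeth Zst_specialization_closed]
        torsion_submodule_eq_zero_iff[OF module noeth Zst_prev_specialization_closed])
  have cond3: "(\<forall>p \<in> Ass R M. coheight_is R p i) \<longleftrightarrow> ?Ass_in_Z"
    by (auto simp: coheight_is_iff[OF assms(5)])
  have cond2a: "(\<forall>x \<in> carrier M. \<exists>ps :: ('a set \<times> nat) list.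
               (\<forall>(p, n) \<in> set ps. primeideal p R \<and> coheight_is R p i \<and> n > 0) \<and>
               (\<forall>a \<in> ideal_prod_list R ps. a \<odot>\<^bsub>M\<^esub> x = \<zero>\<^bsub>M\<^esub>))
      \<longleftrightarrow> (\<forall>x \<in> carrier M. annihilated_by_primes R M {p. coheight_is R p i} x)"
    unfolding annihilated_by_primes_def prime_power_list_def by simp
  have cond2b: "(\<forall>p x. primeideal p R \<and> (\<exists>j < i. coheight_is R p j) \<and> x \<in> carrier M \<and>
               (\<forall>a \<in> p. a \<odot>\<^bsub>M\<^esub> x = \<zero>\<^bsub>M\<^esub>) \<longrightarrow> x = \<zero>\<^bsub>M\<^esub>)
      \<longleftrightarrow> Ass R M \<inter> Zst_prev R i = {}"
    using no_prime_kills_iff[OF module noeth Zst_prev_specialization_closed]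
    by (simp add: ex_less_coheight_iff[OF assms(5)])
  have "{p. coheight_is R p i} \<subseteq> Zst R i" unfolding coheight_is_def by blast
  then have "(\<forall>x \<in> carrier M. annihilated_by_primes R M {p. coheight_is R p i} x)
      \<Longrightarrow> Ass R M \<subseteq> Zst R i"
    using Ass_subset_if_annihilated_by_primes[OF module Zst_specialization_closed] by blast
  moreover have "Ass R M \<subseteq> {p. coheight_is R p i}
      \<Longrightarrow> \<forall>x \<in> carrier M. annihilated_by_primes R M {p. coheight_is R p i} x"
    using annihilated_by_primes_if_Ass_subset[OF module noeth] by blast
  moreover have "Ass R M \<subseteq> {p. coheight_is R p i} \<longleftrightarrow> ?Ass_in_Z"
    using cond3 by (simp add: subset_eq)
  ultimately show ?thesis using cond1 cond2a cond2b cond3 by argo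
qed

end
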